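(* Let $n,p$ be positive integers, $X\in\mathbb{R}^{n\times p}$, $\mathbf y\in\mathbb{R}^n$, $\delta>0$ and $\lambda>0$. The function \[ f_\lambda(\mathbf t)=\frac1n\|\mathbf y-X_{\mathbf t}\widetilde{\boldsymbol\beta}_{\mathbf t}\|_2^2+\lambda\sum_{j=1}^p t_j,\qquad \mathbf t\in[0,1]^p, \] is continuous over $[0,1]^p$ in the sense that for any sequence $\mathbf t^{(1)},\mathbf t^{(2)},\dots\in[0,1)^p$ converging to some $\mathbf t\in[0,1]^p$, the limit $\lim_{l\to\infty}f_\lambda(\mathbf t^{(l)})$ exists and equals $f_\lambda(\mathbf t)$.
   Context: For $\mathbf t\in[0,1]^p$, $T_{\mathbf t}=\mathrm{Diag}(t_1,\dots,t_p)$, $X_{\mathbf t}=XT_{\mathbf t}$, $L_{\mathbf t}=\frac1n[X_{\mathbf t}^\top X_{\mathbf t}+\delta(I-T_{\mathbf t}^2)]$ with $I$ the $p\times p$ identity, and $\widetilde{\boldsymbol\beta}_{\mathbf t}:=L_{\mathbf t}^{+}\left(X_{\mathbf t}^\top\mathbf y/n\right)$ with $L_{\mathbf t}^+$ the Moore–Penrose pseudo-inverse of $L_{\mathbf t}$. *)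

theory Defs
  imports "HOL-Analysis.Analysis"
begin

text \<open>Moore--Penrose pseudo-inverse, defined by the four Penrose conditions
  (it exists and is unique for every real matrix).\<close>
definition pinv :: "real^'n^'m \<Rightarrow> real^'m^'n" where
  "pinv A = (THE B. A ** B ** A = A \<and> B ** A ** B = B \<and>
                    transpose (A ** B) = A ** B \<and> transpose (B ** A) = B ** A)"

definition Tmat :: "real^'p \<Rightarrow> real^'p^'p" where
  "Tmat t = (\<chi> i j. if i = j then t $ i else 0)"

definition Xt :: "real^'p^'n \<Rightarrow> real^'p \<Rightarrow> real^'p^'n" where
  "Xt X t = X ** Tmat t"

definition Lt :: "real^'p^'n \<Rightarrow> real \<Rightarrow> real^'p \<Rightarrow> real^'p^'p" where
  "Lt X \<delta> t = (1 / real CARD('n)) *\<^sub>R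
      (transpose (Xt X t) ** Xt X t + \<delta> *\<^sub>R (mat 1 - Tmat t ** Tmat t))"

definition beta_t :: "real^'p^'n \<Rightarrow> real^'n \<Rightarrow> real \<Rightarrow> real^'p \<Rightarrow> real^'p" where
  "beta_t X y \<delta> t = pinv (Lt X \<delta> t) *v ((1 / real CARD('n)) *\<^sub>R (transpose (Xt X t) *v y))"

definition f_lam :: "real^'p^'n \<Rightarrow> real^'n \<Rightarrow> real \<Rightarrow> real \<Rightarrow> real^'p \<Rightarrow> real" where
  "f_lam X y \<delta> lam t = (1 / real CARD('n)) * (norm (y - Xt X t *v beta_t X y \<delta> t))\<^sup>2
      + lam * (\<Sum>j\<in>UNIV. t $ j)"

end

theory Submission
  imports Defs
begin

text \<open>For \<open>\<bar>t\<^sub>j\<bar> \<le> 1\<close>, \<open>beta_t X y \<delta> t\<close> minimises the penalized loss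
  \<open>\<parallel>y - X\<^sub>t b\<parallel>\<^sup>2 + \<delta> \<Sum>\<^sub>j (1 - t\<^sub>j\<^sup>2) b\<^sub>j\<^sup>2\<close>: since the kernel of \<open>L\<^sub>t\<close> lies in that of
  \<open>X\<^sub>t\<close>, the pseudo-inverse solves the normal equations, and the loss exceeds its minimum by at
  least \<open>\<parallel>X\<^sub>t (b - beta_t)\<parallel>\<^sup>2\<close>. Along \<open>s\<^sub>l \<longrightarrow> t\<close>, the minimiser at \<open>s\<^sub>l\<close> is rewritten as a
  competitor at \<open>t\<close> with the same fitted values up to \<open>o(1)\<close> and a loss at most \<open>o(1)\<close> larger;
  the uniform bound on the penalty controls the coordinates with \<open>t\<^sub>j = 0\<close>. Comparing both
  minimisers with this competitor squeezes the fitted values \<open>X\<^sub>s\<^sub>l beta_t\<close> to \<open>X\<^sub>t beta_t\<close>,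
  and \<open>f_lam\<close> depends on \<open>t\<close> only through them and \<open>\<Sum>\<^sub>j t\<^sub>j\<close>.\<close>

lemma symmetric_matrix_inner:
  fixes A :: "real^'n^'n"
  assumes "transpose A = A"
  shows "(A *v x) \<bullet> y = x \<bullet> (A *v y)"
proof -
  have "A *v x = x v* A"
    using transpose_matrix_vector[of A x] assms by simp
  then show ?thesis by (simp add: dot_lmul_matrix)
qed

lemma symmetric_matrixI:
  fixes A :: "real^'n^'n"
  assumes "\<And>x y. (A *v x) \<bullet> y = x \<bullet> (A *v y)"
  shows "transpose A = A"
proof -
  have "transpose A *v x = A *v x" for x
  proof (rule vector_eq_rdot[THEN iffD1, rule_format])
    show "(transpose A *v x) \<bullet> z = (A *v x) \<bullet> z" for z
      using assms dot_lmul_matrix[of x A] by simp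
  qed
  then show ?thesis by (simp add: matrix_eq)
qed

lemma symmetric_matrix_kernel_iff:
  fixes A :: "real^'n^'n"
  assumes "transpose A = A"
  shows "A *v z = 0 \<longleftrightarrow> (\<forall>x. z \<bullet> (A *v x) = 0)"
proof
  show "\<forall>x. z \<bullet> (A *v x) = 0" if "A *v z = 0"
    using that symmetric_matrix_inner[OF assms, of z] by simp
  show "A *v z = 0" if "\<forall>x. z \<bullet> (A *v x) = 0"
  proof -
    have "(A *v z) \<bullet> (A *v z) = 0"
      using that by (simp add: symmetric_matrix_inner[OF assms])
    then show ?thesis by simp
  qed
qed

lemma span_range_matrix_vector_mult:
  fixes A :: "real^'n^'m"
  shows "span (range ((*v) A)) = range ((*v) A)"
  using linear_subspace_image[OF matrix_vector_mul_linear subspace_UNIV] by (simp add: span_eq_iff)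

lemma symmetric_matrix_range_decomp:
  fixes A :: "real^'n^'n"
  assumes "transpose A = A"
  obtains x' where "x' \<in> range ((*v) A)" "A *v x' = A *v x" "\<And>v. (x - x') \<bullet> (A *v v) = 0"
proof -
  obtain x' z where "x' \<in> range ((*v) A)" "\<And>w. w \<in> range ((*v) A) \<Longrightarrow> orthogonal z w" "x = x' + z"
    using orthogonal_subspace_decomp_exists[of "range ((*v) A)" x]
    unfolding span_range_matrix_vector_mult by metis
  moreover from this have "A *v z = 0"
    using symmetric_matrix_kernel_iff[OF assms] by (simp add: orthogonal_def)
  ultimately show thesis
    by (intro that) (auto simp: orthogonal_def matrix_vector_right_distrib)
qed

lemma symmetric_matrix_inj_on_range:
  fixes A :: "real^'n^'n"
  assumes "transpose A = A"
  shows "inj_on ((*v) A) (range ((*v) A))"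
proof (rule inj_onI)
  fix x x' assume "x \<in> range ((*v) A)" "x' \<in> range ((*v) A)" "A *v x = A *v x'"
  then obtain u u' where "x = A *v u" "x' = A *v u'" "A *v x = A *v x'" by auto
  then have "x - x' = A *v (u - u')" "A *v (x - x') = 0"
    by (simp_all add: matrix_vector_mult_diff_distrib)
  then have "(x - x') \<bullet> (x - x') = 0"
    using symmetric_matrix_kernel_iff[OF assms] by simp
  then show "x = x'" by simp
qed

definition penrose_inverse :: "real^'n^'m \<Rightarrow> real^'m^'n \<Rightarrow> bool" where
  "penrose_inverse A B \<longleftrightarrow> A ** B ** A = A \<and> B ** A ** B = B \<and>
     transpose (A ** B) = A ** B \<and> transpose (B ** A) = B ** A"

lemma penrose_inverse_unique:
  assumes "penrose_inverse A B" "penrose_inverse A C"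
  shows "B = C"
proof -
  from assms have B: "A ** B ** A = A" "B ** A ** B = B"
      "transpose (A ** B) = A ** B" "transpose (B ** A) = B ** A"
    and C: "A ** C ** A = A" "C ** A ** C = C"
      "transpose (A ** C) = A ** C" "transpose (C ** A) = C ** A"
    unfolding penrose_inverse_def by auto
  have "B = B ** transpose (A ** B)" using B(2,3) by (simp add: matrix_mul_assoc)
  also have "\<dots> = B ** transpose (A ** C ** A ** B)" using C(1) by simp
  also have "\<dots> = B ** transpose (A ** B) ** transpose (A ** C)"
    by (simp only: matrix_transpose_mul matrix_mul_assoc)
  also have "\<dots> = B ** A ** C"
    using B(3) C(3) by (simp add: matrix_mul_assoc B(2)[unfolded matrix_mul_assoc])
  finally have B_eq: "B = B ** A ** C" .
  have "C = transpose (C ** A) ** C" using C(2,4) by simp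
  also have "\<dots> = transpose (C ** (A ** B ** A)) ** C" using B(1) by simp
  also have "\<dots> = transpose (B ** A) ** transpose (C ** A) ** C"
    by (simp only: matrix_transpose_mul matrix_mul_assoc)
  also have "\<dots> = B ** A ** C"
    using B(4) C(4) by (simp add: C(2)[unfolded matrix_mul_assoc[symmetric]] flip: matrix_mul_assoc)
  finally show ?thesis using B_eq by simp
qed

text \<open>For symmetric \<open>A\<close>, a linear left inverse \<open>g\<close> of \<open>A\<close> on its range gives the orthogonal
  projection \<open>P = g \<circ> A\<close> onto that range, and \<open>B = g \<circ> g \<circ> A\<close> satisfies \<open>A B = B A = P\<close>.\<close>
lemma symmetric_matrix_penrose_inverse_exists:
  fixes A :: "real^'n^'n"
  assumes sym: "transpose A = A"
  shows "\<exists>B. penrose_inverse A B"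
proof -
  let ?V = "range ((*v) A)"
  obtain g where g: "range g \<subseteq> ?V" "linear g" "\<And>v. v \<in> ?V \<Longrightarrow> g (A *v v) = v"
    using linear_exists_left_inverse_on[OF matrix_vector_mul_linear _ symmetric_matrix_inj_on_range[OF sym]]
      subspace_UNIV linear_subspace_image[OF matrix_vector_mul_linear] by metis
  define P where "P x = g (A *v x)" for x
  have P: "P x \<in> ?V" "A *v P x = A *v x" "(x - P x) \<bullet> (A *v v) = 0" for x v
  proof -
    obtain x' where x': "x' \<in> ?V" "A *v x' = A *v x" "\<And>v. (x - x') \<bullet> (A *v v) = 0"
      using symmetric_matrix_range_decomp[OF sym, of x] by blast
    have "P x = x'" unfolding P_def using g(3)[OF x'(1)] x'(2) by simp
    then show "P x \<in> ?V" "A *v P x = A *v x" "(x - P x) \<bullet> (A *v v) = 0" using x' by auto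
  qed
  have gV: "g v \<in> ?V" for v using g(1) by auto
  have P_range: "P v = v" if "v \<in> ?V" for v using g(3)[OF that] by (simp add: P_def)
  have A_g: "A *v g v = v" if "v \<in> ?V" for v using that P(2) by (auto simp: P_def)
  have P_perp: "(x - P x) \<bullet> v = 0" if "v \<in> ?V" for x v using that P(3) by auto
  have P_sym: "P x \<bullet> y = x \<bullet> P y" for x y
  proof -
    have "P x \<bullet> (y - P y) = 0" "(x - P x) \<bullet> P y = 0"
      using P_perp P(1) by (simp_all add: inner_commute)
    then show ?thesis by (simp add: inner_diff_left inner_diff_right)
  qed
  define B where "B = matrix g ** matrix g ** A"
  have B: "B *v x = g (P x)" for x
    using fun_cong[OF matrix_vector_mul(2)[OF g(2)]]
    by (simp add: B_def P_def flip: matrix_vector_mul_assoc)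
  have AB: "A *v (B *v x) = P x" for x
    by (simp add: B A_g P(1))
  have BA: "B *v (A *v x) = P x" for x
    by (simp add: B P_range) (simp add: P_def)
  have "penrose_inverse A B"
    unfolding penrose_inverse_def
  proof (intro conjI)
    show "A ** B ** A = A"
      by (simp add: matrix_eq AB P_range flip: matrix_vector_mul_assoc)
    show "B ** A ** B = B"
      by (simp add: matrix_eq BA B P_range g(3) gV flip: matrix_vector_mul_assoc)
    show "transpose (A ** B) = A ** B" "transpose (B ** A) = B ** A"
      by (rule symmetric_matrixI; simp add: AB BA P_sym flip: matrix_vector_mul_assoc)+
  qed
  then show ?thesis ..
qed

lemma penrose_inverse_pinv:
  fixes A :: "real^'n^'n"
  assumes "transpose A = A"
  shows "penrose_inverse A (pinv A)"
proof -
  have "\<exists>!B. penrose_inverse A B"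
    using symmetric_matrix_penrose_inverse_exists[OF assms] penrose_inverse_unique by blast
  then show ?thesis
    unfolding pinv_def penrose_inverse_def[symmetric] by (rule theI')
qed

text \<open>The residual \<open>b - A (pinv A b)\<close> lies in the kernel of \<open>A\<close>, because
  \<open>A A pinv A = (A pinv A A)\<^sup>T = A\<close>.\<close>
lemma symmetric_matrix_pinv_solves:
  fixes A :: "real^'n^'n"
  assumes sym: "transpose A = A" and b: "\<And>w. A *v w = 0 \<Longrightarrow> b \<bullet> w = 0"
  shows "A *v (pinv A *v b) = b"
proof -
  let ?P = "pinv A"
  have "A ** ?P ** A = A" "transpose (A ** ?P) = A ** ?P"
    using penrose_inverse_pinv[OF sym] by (auto simp: penrose_inverse_def)
  then have "A ** A ** ?P = A"
    by (metis sym matrix_mul_assoc matrix_transpose_mul)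
  define w where "w = b - A *v (?P *v b)"
  then have "A *v w = 0"
    using \<open>A ** A ** ?P = A\<close>
    by (simp add: matrix_vector_mult_diff_distrib matrix_vector_mul_assoc matrix_mul_assoc)
  then have "b \<bullet> w = 0" "(A *v (?P *v b)) \<bullet> w = 0"
    using b symmetric_matrix_inner[OF sym] by auto
  then have "w \<bullet> w = 0" by (simp add: w_def inner_diff_left)
  then show ?thesis by (simp add: w_def)
qed

lemma Tmat_mult_vec: "Tmat u *v w = (\<chi> j. u $ j * w $ j)"
  by (simp add: Tmat_def matrix_vector_mult_def vec_eq_iff if_distrib if_distribR sum.delta cong: if_cong)

lemma Xt_mult_vec: "Xt X u *v w = X *v (\<chi> j. u $ j * w $ j)"
  by (simp add: Xt_def Tmat_mult_vec flip: matrix_vector_mul_assoc)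

lemma Lt_mult_vec:
  fixes X :: "real^'p^'n"
  shows "Lt X \<delta> u *v w = (1 / real CARD('n)) *\<^sub>R
    (transpose (Xt X u) *v (Xt X u *v w) + \<delta> *\<^sub>R (\<chi> j. (1 - (u $ j)\<^sup>2) * w $ j))"
proof -
  have "(mat 1 - Tmat u ** Tmat u) *v w = (\<chi> j. (1 - (u $ j)\<^sup>2) * w $ j)"
    by (simp add: matrix_vector_mult_diff_rdistrib Tmat_mult_vec vec_eq_iff power2_eq_square
        algebra_simps flip: matrix_vector_mul_assoc)
  then show ?thesis
    unfolding Lt_def
    by (simp add: matrix_vector_mult_add_rdistrib flip: scaleR_matrix_vector_assoc matrix_vector_mul_assoc)
qed

lemma Lt_inner:
  fixes X :: "real^'p^'n"
  shows "(Lt X \<delta> u *v w) \<bullet> v = (1 / real CARD('n)) *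
    ((Xt X u *v w) \<bullet> (Xt X u *v v) + \<delta> * (\<Sum>j\<in>UNIV. (1 - (u $ j)\<^sup>2) * w $ j * v $ j))"
  by (simp only: Lt_mult_vec inner_scaleR_left inner_add_left transpose_matrix_vector dot_lmul_matrix)
    (simp add: inner_vec_def)

lemma Lt_symmetric: "transpose (Lt X \<delta> u) = Lt X \<delta> u"
proof (rule symmetric_matrixI)
  show "(Lt X \<delta> u *v x) \<bullet> y = x \<bullet> (Lt X \<delta> u *v y)" for x y
    using Lt_inner[of X \<delta> u x y] Lt_inner[of X \<delta> u y x]
    by (simp add: inner_commute mult.commute mult.left_commute)
qed

lemma penalty_nonneg:
  assumes "\<And>j. \<bar>u $ j\<bar> \<le> (1::real)"
  shows "0 \<le> (\<Sum>j\<in>UNIV. (1 - (u $ j)\<^sup>2) * (h $ j)\<^sup>2)"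
  using assms by (intro sum_nonneg) (simp add: abs_square_le_1)

lemma Lt_mult_beta_t:
  fixes X :: "real^'p^'n"
  assumes "\<delta> > 0" "\<And>j. \<bar>u $ j\<bar> \<le> 1"
  shows "Lt X \<delta> u *v beta_t X y \<delta> u = (1 / real CARD('n)) *\<^sub>R (transpose (Xt X u) *v y)"
  unfolding beta_t_def
proof (rule symmetric_matrix_pinv_solves[OF Lt_symmetric])
  fix w assume "Lt X \<delta> u *v w = 0"
  then have "(Xt X u *v w) \<bullet> (Xt X u *v w) + \<delta> * (\<Sum>j\<in>UNIV. (1 - (u $ j)\<^sup>2) * (w $ j)\<^sup>2) = 0"
    using Lt_inner[of X \<delta> u w w] by (simp add: power2_eq_square mult.assoc)
  moreover have "0 \<le> \<delta> * (\<Sum>j\<in>UNIV. (1 - (u $ j)\<^sup>2) * (w $ j)\<^sup>2)"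
    using assms by (simp add: penalty_nonneg)
  ultimately have "(Xt X u *v w) \<bullet> (Xt X u *v w) = 0"
    using inner_ge_zero[of "Xt X u *v w"] by linarith
  then have "Xt X u *v w = 0" by simp
  then show "((1 / real CARD('n)) *\<^sub>R (transpose (Xt X u) *v y)) \<bullet> w = 0"
    by (simp add: dot_lmul_matrix)
qed

lemma beta_t_residual_inner:
  fixes X :: "real^'p^'n"
  assumes "\<delta> > 0" "\<And>j. \<bar>u $ j\<bar> \<le> 1"
  shows "(y - Xt X u *v beta_t X y \<delta> u) \<bullet> (Xt X u *v h) =
    \<delta> * (\<Sum>j\<in>UNIV. (1 - (u $ j)\<^sup>2) * beta_t X y \<delta> u $ j * h $ j)"
proof -
  have "(Lt X \<delta> u *v beta_t X y \<delta> u) \<bullet> h = ((1 / real CARD('n)) *\<^sub>R (transpose (Xt X u) *v y)) \<bullet> h"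
    by (simp add: Lt_mult_beta_t[OF assms])
  then show ?thesis
    by (simp add: Lt_inner dot_lmul_matrix inner_diff_left)
qed

text \<open>\<open>n\<close> times the objective that \<open>beta_t\<close> minimises.\<close>
definition penalized_loss :: "real^'p^'n \<Rightarrow> real^'n \<Rightarrow> real \<Rightarrow> real^'p \<Rightarrow> real^'p \<Rightarrow> real" where
  "penalized_loss X y \<delta> u b =
    (norm (y - Xt X u *v b))\<^sup>2 + \<delta> * (\<Sum>j\<in>UNIV. (1 - (u $ j)\<^sup>2) * (b $ j)\<^sup>2)"

lemma penalized_loss_expansion:
  assumes "\<And>h. (y - Xt X u *v b) \<bullet> (Xt X u *v h) = \<delta> * (\<Sum>j\<in>UNIV. (1 - (u $ j)\<^sup>2) * b $ j * h $ j)"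
  shows "penalized_loss X y \<delta> u (b + h) = penalized_loss X y \<delta> u b
    + (norm (Xt X u *v h))\<^sup>2 + \<delta> * (\<Sum>j\<in>UNIV. (1 - (u $ j)\<^sup>2) * (h $ j)\<^sup>2)"
proof -
  have residual: "(norm (y - Xt X u *v (b + h)))\<^sup>2 = (norm (y - Xt X u *v b))\<^sup>2
      - 2 * ((y - Xt X u *v b) \<bullet> (Xt X u *v h)) + (norm (Xt X u *v h))\<^sup>2"
    by (simp add: matrix_vector_right_distrib power2_norm_eq_inner diff_add_eq_diff_diff_swap
        inner_diff_left inner_diff_right inner_commute)
  have weighted_sum: "(\<Sum>j\<in>UNIV. d j * ((b + h) $ j)\<^sup>2) = (\<Sum>j\<in>UNIV. d j * (b $ j)\<^sup>2)
      + 2 * (\<Sum>j\<in>UNIV. d j * b $ j * h $ j) + (\<Sum>j\<in>UNIV. d j * (h $ j)\<^sup>2)" for d :: "'a \<Rightarrow> real"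
    by (simp add: power2_sum sum.distrib sum_distrib_left algebra_simps)
  show ?thesis
    unfolding penalized_loss_def residual assms weighted_sum[of "\<lambda>j. 1 - (u $ j)\<^sup>2"]
    by algebra
qed

lemma penalized_loss_beta_t_minimal:
  fixes X :: "real^'p^'n"
  assumes "\<delta> > 0" "\<And>j. \<bar>u $ j\<bar> \<le> 1"
  shows "penalized_loss X y \<delta> u (beta_t X y \<delta> u) + (norm (Xt X u *v (b - beta_t X y \<delta> u)))\<^sup>2
    \<le> penalized_loss X y \<delta> u b"
  using penalized_loss_expansion[OF beta_t_residual_inner[OF assms], of X y "b - beta_t X y \<delta> u"]
    penalty_nonneg[OF assms(2), of "b - beta_t X y \<delta> u"] assms(1)
  by simp

lemma penalized_loss_beta_t_le:
  fixes X :: "real^'p^'n"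
  assumes "\<delta> > 0" "\<And>j. \<bar>u $ j\<bar> \<le> 1"
  shows "penalized_loss X y \<delta> u (beta_t X y \<delta> u) \<le> (norm y)\<^sup>2"
proof -
  have "penalized_loss X y \<delta> u (beta_t X y \<delta> u) + (norm (Xt X u *v (0 - beta_t X y \<delta> u)))\<^sup>2
      \<le> penalized_loss X y \<delta> u 0"
    by (rule penalized_loss_beta_t_minimal[OF assms])
  moreover have "penalized_loss X y \<delta> u 0 = (norm y)\<^sup>2"
    by (simp add: penalized_loss_def)
  ultimately show ?thesis
    using zero_le_power2[of "norm (Xt X u *v (0 - beta_t X y \<delta> u))"] by linarith
qed

lemma penalized_loss_bounds:
  assumes "penalized_loss X y \<delta> u b \<le> K" "\<delta> \<ge> 0" "\<And>j. \<bar>u $ j\<bar> \<le> 1"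
  shows "norm (y - Xt X u *v b) \<le> sqrt K" "\<delta> * ((1 - (u $ j)\<^sup>2) * (b $ j)\<^sup>2) \<le> K"
proof -
  have terms_nonneg: "0 \<le> (1 - (u $ i)\<^sup>2) * (b $ i)\<^sup>2" for i
    using assms(3) by (simp add: abs_square_le_1)
  then have "(1 - (u $ j)\<^sup>2) * (b $ j)\<^sup>2 \<le> (\<Sum>j\<in>UNIV. (1 - (u $ j)\<^sup>2) * (b $ j)\<^sup>2)"
    by (intro member_le_sum) auto
  moreover have "0 \<le> (\<Sum>j\<in>UNIV. (1 - (u $ j)\<^sup>2) * (b $ j)\<^sup>2)"
    using terms_nonneg by (simp add: sum_nonneg)
  ultimately have "\<delta> * ((1 - (u $ j)\<^sup>2) * (b $ j)\<^sup>2) \<le> \<delta> * (\<Sum>j\<in>UNIV. (1 - (u $ j)\<^sup>2) * (b $ j)\<^sup>2)"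
    "0 \<le> \<delta> * (\<Sum>j\<in>UNIV. (1 - (u $ j)\<^sup>2) * (b $ j)\<^sup>2)"
    using assms(2) by (simp_all add: mult_left_mono)
  moreover have "0 \<le> (norm (y - Xt X u *v b))\<^sup>2" by simp
  ultimately show "\<delta> * ((1 - (u $ j)\<^sup>2) * (b $ j)\<^sup>2) \<le> K" "norm (y - Xt X u *v b) \<le> sqrt K"
    using assms(1) unfolding penalized_loss_def by (linarith, intro real_le_rsqrt, linarith)
qed

lemma tendsto_matrix_vector_mult [tendsto_intros]:
  fixes A :: "real^'n^'m"
  shows "(f \<longlongrightarrow> a) F \<Longrightarrow> ((\<lambda>x. A *v f x) \<longlongrightarrow> A *v a) F"
  by (rule bounded_linear.tendsto[OF matrix_vector_mul_bounded_linear])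

lemma penalized_loss_tendsto:
  assumes "s \<longlonglongrightarrow> t"
  shows "(\<lambda>l. penalized_loss X y \<delta> (s l) b) \<longlonglongrightarrow> penalized_loss X y \<delta> t b"
  unfolding penalized_loss_def Xt_mult_vec
  by (intro tendsto_intros tendsto_vec_nth assms)

lemma power2_norm_add_le:
  fixes a v :: "'a::real_normed_vector"
  assumes "norm a \<le> r"
  shows "(norm (a + v))\<^sup>2 \<le> (norm a)\<^sup>2 + 2 * r * norm v + (norm v)\<^sup>2"
proof -
  have "(norm (a + v))\<^sup>2 \<le> (norm a + norm v)\<^sup>2"
    by (intro power_mono norm_triangle_ineq) simp
  also have "\<dots> \<le> (norm a)\<^sup>2 + 2 * r * norm v + (norm v)\<^sup>2"
    using assms by (simp add: power2_sum mult_right_mono)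
  finally show ?thesis .
qed

text \<open>Once \<open>\<bar>a l\<bar> < 1/2\<close>, the penalty bound caps \<open>(b l)\<^sup>2\<close> by \<open>4 K / (3 \<delta>)\<close>.\<close>
lemma penalized_product_tendsto_zero:
  fixes a b :: "nat \<Rightarrow> real"
  assumes "a \<longlonglongrightarrow> 0" "\<And>l. \<delta> * ((1 - (a l)\<^sup>2) * (b l)\<^sup>2) \<le> K" "\<delta> > 0"
  shows "(\<lambda>l. a l * b l) \<longlonglongrightarrow> 0"
proof (rule Lim_null_comparison)
  define C where "C = sqrt (4 * K / (3 * \<delta>))"
  have "\<forall>\<^sub>F l in sequentially. \<bar>a l\<bar> < 1/2"
    using tendstoD[OF assms(1), of "1/2"] by (simp add: dist_real_def)
  then show "\<forall>\<^sub>F l in sequentially. norm (a l * b l) \<le> \<bar>a l\<bar> * C"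
  proof (rule eventually_mono)
    fix l assume "\<bar>a l\<bar> < 1/2"
    then have "\<bar>a l\<bar>\<^sup>2 \<le> (1/2)\<^sup>2" by (intro power_mono) auto
    then have "(a l)\<^sup>2 \<le> 1/4" by (simp add: power2_eq_square)
    then have "\<delta> * (3/4 * (b l)\<^sup>2) \<le> \<delta> * ((1 - (a l)\<^sup>2) * (b l)\<^sup>2)"
      using assms(3) by (intro mult_left_mono mult_right_mono) auto
    then have "\<delta> * (3/4 * (b l)\<^sup>2) \<le> K" using assms(2)[of l] by linarith
    then have "(b l)\<^sup>2 \<le> 4 * K / (3 * \<delta>)" using assms(3) by (simp add: field_simps)
    then have "\<bar>b l\<bar> \<le> C" unfolding C_def by (metis real_le_rsqrt power2_abs)
    then show "norm (a l * b l) \<le> \<bar>a l\<bar> * C" by (simp add: abs_mult mult_left_mono)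
  qed
  show "(\<lambda>l. \<bar>a l\<bar> * C) \<longlonglongrightarrow> 0"
    by (intro tendsto_mult_left_zero tendsto_rabs_zero assms(1))
qed

text \<open>The difference is \<open>(b l)\<^sup>2 g l\<close> with \<open>g l \<longrightarrow> 0\<close>, and \<open>(b l)\<^sup>2\<close> stays bounded because
  \<open>1 - (a l)\<^sup>2 \<longrightarrow> 1 - \<tau>\<^sup>2 > 0\<close>.\<close>
lemma rescaled_penalty_difference_tendsto_zero:
  fixes a b :: "nat \<Rightarrow> real"
  assumes "a \<longlonglongrightarrow> \<tau>" "\<tau> \<noteq> 0" "\<bar>\<tau>\<bar> < 1"
    and "\<And>l. \<delta> * ((1 - (a l)\<^sup>2) * (b l)\<^sup>2) \<le> K" "\<delta> > 0"
  shows "(\<lambda>l. (1 - \<tau>\<^sup>2) * (a l * b l / \<tau>)\<^sup>2 - (1 - (a l)\<^sup>2) * (b l)\<^sup>2) \<longlonglongrightarrow> 0"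
proof (rule Lim_null_comparison)
  define D where "D = 1 - \<tau>\<^sup>2"
  have D: "D > 0" unfolding D_def using assms(3) by (simp add: abs_square_less_1)
  define C where "C = 2 * K / (\<delta> * D)"
  define g where "g l = D * (a l)\<^sup>2 / \<tau>\<^sup>2 - (1 - (a l)\<^sup>2)" for l
  have "(\<lambda>l. 1 - (a l)\<^sup>2) \<longlonglongrightarrow> D" unfolding D_def by (intro tendsto_intros assms(1))
  then have "\<forall>\<^sub>F l in sequentially. 1 - (a l)\<^sup>2 > D/2" using D by (intro order_tendstoD(1)) auto
  then show "\<forall>\<^sub>F l in sequentially.
      norm ((1 - \<tau>\<^sup>2) * (a l * b l / \<tau>)\<^sup>2 - (1 - (a l)\<^sup>2) * (b l)\<^sup>2) \<le> C * \<bar>g l\<bar>"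
  proof (rule eventually_mono)
    fix l assume "1 - (a l)\<^sup>2 > D/2"
    then have "\<delta> * (D/2 * (b l)\<^sup>2) \<le> \<delta> * ((1 - (a l)\<^sup>2) * (b l)\<^sup>2)"
      using assms(5) by (intro mult_left_mono mult_right_mono) auto
    then have "(b l)\<^sup>2 \<le> C"
      unfolding C_def using assms(4)[of l] assms(5) D by (simp add: field_simps)
    moreover have "(1 - \<tau>\<^sup>2) * (a l * b l / \<tau>)\<^sup>2 - (1 - (a l)\<^sup>2) * (b l)\<^sup>2 = (b l)\<^sup>2 * g l"
      unfolding g_def D_def by (simp add: power_mult_distrib power_divide algebra_simps)
    ultimately show "norm ((1 - \<tau>\<^sup>2) * (a l * b l / \<tau>)\<^sup>2 - (1 - (a l)\<^sup>2) * (b l)\<^sup>2) \<le> C * \<bar>g l\<bar>"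
      by (simp add: abs_mult mult_right_mono)
  qed
  have "g \<longlonglongrightarrow> D * \<tau>\<^sup>2 / \<tau>\<^sup>2 - (1 - \<tau>\<^sup>2)"
    unfolding g_def by (intro tendsto_intros assms(1)) (use assms(2) in auto)
  then have "g \<longlonglongrightarrow> 0" using assms(2) by (simp add: D_def)
  then show "(\<lambda>l. C * \<bar>g l\<bar>) \<longlonglongrightarrow> 0"
    by (intro tendsto_mult_right_zero tendsto_rabs_zero)
qed

text \<open>Take \<open>c = a b / \<tau>\<close> if \<open>\<tau> \<noteq> 0\<close>; if \<open>\<tau> = 0\<close>, the whole product \<open>a b\<close> becomes the
  remainder \<open>e\<close>, which vanishes by the penalty bound.\<close>
lemma coordinate_transport:
  fixes a b :: "nat \<Rightarrow> real"
  assumes "a \<longlonglongrightarrow> \<tau>" "\<bar>\<tau>\<bar> \<le> 1" "\<And>l. \<bar>a l\<bar> \<le> 1"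
    and "\<And>l. \<delta> * ((1 - (a l)\<^sup>2) * (b l)\<^sup>2) \<le> K" "\<delta> > 0"
  obtains c e q where "\<And>l. a l * b l = \<tau> * c l + e l" "e \<longlonglongrightarrow> 0"
    "\<And>l. (1 - \<tau>\<^sup>2) * (c l)\<^sup>2 \<le> (1 - (a l)\<^sup>2) * (b l)\<^sup>2 + q l" "q \<longlonglongrightarrow> 0"
proof -
  have penalty_nonneg: "0 \<le> (1 - (a l)\<^sup>2) * (b l)\<^sup>2" for l
    using assms(3) by (simp add: abs_square_le_1)
  consider "\<tau> = 0" | "\<bar>\<tau>\<bar> = 1" | "\<tau> \<noteq> 0" "\<bar>\<tau>\<bar> < 1"
    using assms(2) by linarith
  then show thesis
  proof cases
    case 1
    show thesis
      by (rule that[of "\<lambda>_. 0" "\<lambda>l. a l * b l" "\<lambda>_. 0"])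
        (use 1 assms(1) penalty_nonneg penalized_product_tendsto_zero[OF _ assms(4,5)] in auto)
  next
    case 2
    then have "\<tau> \<noteq> 0" "\<tau>\<^sup>2 = 1" using power2_abs[of \<tau>] by auto
    then show thesis
      by (intro that[of "\<lambda>l. a l * b l / \<tau>" "\<lambda>_. 0" "\<lambda>_. 0"]) (auto simp: penalty_nonneg)
  next
    case 3
    show thesis
      by (rule that[of "\<lambda>l. a l * b l / \<tau>" "\<lambda>_. 0"
            "\<lambda>l. (1 - \<tau>\<^sup>2) * (a l * b l / \<tau>)\<^sup>2 - (1 - (a l)\<^sup>2) * (b l)\<^sup>2"])
        (use 3 rescaled_penalty_difference_tendsto_zero[OF assms(1) _ _ assms(4,5)] in auto)
  qed
qed

lemma coordinatewise_transport:
  fixes s b :: "nat \<Rightarrow> real^'p"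
  assumes "s \<longlonglongrightarrow> t" "\<And>j. \<bar>t $ j\<bar> \<le> 1" "\<And>l j. \<bar>s l $ j\<bar> \<le> 1"
    and "\<And>l j. \<delta> * ((1 - (s l $ j)\<^sup>2) * (b l $ j)\<^sup>2) \<le> K" "\<delta> > 0"
  obtains c e q where "\<And>l. (\<chi> j. s l $ j * b l $ j) = (\<chi> j. t $ j * c l $ j) + e l" "e \<longlonglongrightarrow> 0"
    "\<And>l j. (1 - (t $ j)\<^sup>2) * (c l $ j)\<^sup>2 \<le> (1 - (s l $ j)\<^sup>2) * (b l $ j)\<^sup>2 + q l j"
    "\<And>j. (\<lambda>l. q l j) \<longlonglongrightarrow> 0"
proof -
  have "\<forall>j. \<exists>c e q. (\<forall>l. s l $ j * b l $ j = t $ j * c l + e l) \<and> e \<longlonglongrightarrow> 0 \<and>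
      (\<forall>l. (1 - (t $ j)\<^sup>2) * (c l)\<^sup>2 \<le> (1 - (s l $ j)\<^sup>2) * (b l $ j)\<^sup>2 + q l) \<and> q \<longlonglongrightarrow> 0"
  proof
    fix j
    obtain c e q where "\<And>l. s l $ j * b l $ j = t $ j * c l + e l" "e \<longlonglongrightarrow> 0"
      "\<And>l. (1 - (t $ j)\<^sup>2) * (c l)\<^sup>2 \<le> (1 - (s l $ j)\<^sup>2) * (b l $ j)\<^sup>2 + q l" "q \<longlonglongrightarrow> 0"
      using coordinate_transport[OF tendsto_vec_nth[where i = j, OF assms(1)] assms(2)[of j]
          assms(3) assms(4) assms(5)]
      by blast
    then show "\<exists>c e q. (\<forall>l. s l $ j * b l $ j = t $ j * c l + e l) \<and> e \<longlonglongrightarrow> 0 \<and>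
      (\<forall>l. (1 - (t $ j)\<^sup>2) * (c l)\<^sup>2 \<le> (1 - (s l $ j)\<^sup>2) * (b l $ j)\<^sup>2 + q l) \<and> q \<longlonglongrightarrow> 0"
      by blast
  qed
  then obtain C E Q where CEQ:
      "\<And>j l. s l $ j * b l $ j = t $ j * C j l + E j l" "\<And>j. E j \<longlonglongrightarrow> 0"
      "\<And>j l. (1 - (t $ j)\<^sup>2) * (C j l)\<^sup>2 \<le> (1 - (s l $ j)\<^sup>2) * (b l $ j)\<^sup>2 + Q j l"
      "\<And>j. Q j \<longlonglongrightarrow> 0"
    by metis
  show thesis
  proof (rule that[of "\<lambda>l. \<chi> j. C j l" "\<lambda>l. \<chi> j. E j l" "\<lambda>l j. Q j l"])
    show "(\<lambda>l. \<chi> j. E j l) \<longlonglongrightarrow> 0"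
      by (rule vec_tendstoI) (simp add: CEQ(2))
  qed (simp_all add: vec_eq_iff CEQ(1,3,4))
qed

lemma penalized_loss_transport:
  fixes X :: "real^'p^'n" and s b :: "nat \<Rightarrow> real^'p"
  assumes "s \<longlonglongrightarrow> t" "\<And>j. \<bar>t $ j\<bar> \<le> 1" "\<And>l j. \<bar>s l $ j\<bar> \<le> 1" "\<delta> > 0"
    and "\<And>l. penalized_loss X y \<delta> (s l) (b l) \<le> K"
  obtains c e G where "\<And>l. Xt X (s l) *v b l = Xt X t *v c l + X *v e l" "e \<longlonglongrightarrow> 0"
    "\<And>l. penalized_loss X y \<delta> t (c l) \<le> penalized_loss X y \<delta> (s l) (b l) + G l" "G \<longlonglongrightarrow> 0"
proof -
  note bounds = penalized_loss_bounds[OF assms(5) less_imp_le[OF assms(4)] assms(3)]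
  obtain c e q where coord: "\<And>l. (\<chi> j. s l $ j * b l $ j) = (\<chi> j. t $ j * c l $ j) + e l"
    and e: "e \<longlonglongrightarrow> 0"
    and penalty: "\<And>l j. (1 - (t $ j)\<^sup>2) * (c l $ j)\<^sup>2 \<le> (1 - (s l $ j)\<^sup>2) * (b l $ j)\<^sup>2 + q l j"
    and q: "\<And>j. (\<lambda>l. q l j) \<longlonglongrightarrow> 0"
    using coordinatewise_transport[OF assms(1,2,3) bounds(2) assms(4)] by blast
  define G where "G l = 2 * sqrt K * norm (X *v e l) + (norm (X *v e l))\<^sup>2 + \<delta> * (\<Sum>j\<in>UNIV. q l j)"
    for l
  have split: "Xt X (s l) *v b l = Xt X t *v c l + X *v e l" for l
    by (simp add: Xt_mult_vec coord matrix_vector_right_distrib)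
  have "(\<lambda>l. norm (X *v e l)) \<longlonglongrightarrow> 0"
    using tendsto_matrix_vector_mult[OF e, of X] by (simp add: tendsto_norm_zero)
  moreover have "(\<lambda>l. \<Sum>j\<in>UNIV. q l j) \<longlonglongrightarrow> 0"
    by (intro tendsto_null_sum q)
  ultimately have "G \<longlonglongrightarrow> 2 * sqrt K * 0 + 0\<^sup>2 + \<delta> * 0"
    unfolding G_def by (intro tendsto_intros)
  then have G: "G \<longlonglongrightarrow> 0" by simp
  have loss: "penalized_loss X y \<delta> t (c l) \<le> penalized_loss X y \<delta> (s l) (b l) + G l" for l
  proof -
    have "y - Xt X t *v c l = (y - Xt X (s l) *v b l) + X *v e l"
      using split[of l] by (simp add: algebra_simps)
    then have "(norm (y - Xt X t *v c l))\<^sup>2 \<le> (norm (y - Xt X (s l) *v b l))\<^sup>2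
        + 2 * sqrt K * norm (X *v e l) + (norm (X *v e l))\<^sup>2"
      using power2_norm_add_le[OF bounds(1)] by presburger
    moreover have "(\<Sum>j\<in>UNIV. (1 - (t $ j)\<^sup>2) * (c l $ j)\<^sup>2)
        \<le> (\<Sum>j\<in>UNIV. (1 - (s l $ j)\<^sup>2) * (b l $ j)\<^sup>2) + (\<Sum>j\<in>UNIV. q l j)"
      unfolding sum.distrib[symmetric] by (intro sum_mono penalty)
    then have "\<delta> * (\<Sum>j\<in>UNIV. (1 - (t $ j)\<^sup>2) * (c l $ j)\<^sup>2)
        \<le> \<delta> * (\<Sum>j\<in>UNIV. (1 - (s l $ j)\<^sup>2) * (b l $ j)\<^sup>2) + \<delta> * (\<Sum>j\<in>UNIV. q l j)"
      using assms(4) by (simp flip: distrib_left)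
    ultimately show ?thesis
      unfolding penalized_loss_def G_def by linarith
  qed
  show thesis by (rule that[OF split e loss G])
qed

lemma Xt_beta_t_tendsto:
  fixes X :: "real^'p^'n" and s :: "nat \<Rightarrow> real^'p"
  assumes "\<delta> > 0" "s \<longlonglongrightarrow> t" "\<And>j. \<bar>t $ j\<bar> \<le> 1" "\<And>l j. \<bar>s l $ j\<bar> \<le> 1"
  shows "(\<lambda>l. Xt X (s l) *v beta_t X y \<delta> (s l)) \<longlonglongrightarrow> Xt X t *v beta_t X y \<delta> t"
proof -
  let ?\<beta> = "beta_t X y \<delta> t" and ?loss = "penalized_loss X y \<delta>"
  define b where "b l = beta_t X y \<delta> (s l)" for l
  obtain c e G where split: "\<And>l. Xt X (s l) *v b l = Xt X t *v c l + X *v e l"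
    and e: "e \<longlonglongrightarrow> 0" and transport: "\<And>l. ?loss t (c l) \<le> ?loss (s l) (b l) + G l"
    and G: "G \<longlonglongrightarrow> 0"
    using penalized_loss_transport[OF assms(2,3,4,1), of X y b "(norm y)\<^sup>2"]
      penalized_loss_beta_t_le[OF assms(1,4)]
    unfolding b_def by blast
  define A where "A l = ?loss (s l) ?\<beta> - ?loss t ?\<beta> + G l" for l
  have bound: "(norm (Xt X t *v (c l - ?\<beta>)))\<^sup>2 \<le> A l" for l
  proof -
    have "?loss t ?\<beta> + (norm (Xt X t *v (c l - ?\<beta>)))\<^sup>2 \<le> ?loss t (c l)"
      by (rule penalized_loss_beta_t_minimal[OF assms(1,3)])
    moreover have "?loss (s l) (b l) + (norm (Xt X (s l) *v (?\<beta> - b l)))\<^sup>2 \<le> ?loss (s l) ?\<beta>"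
      unfolding b_def by (rule penalized_loss_beta_t_minimal[OF assms(1) assms(4)[of l]])
    ultimately show ?thesis
      using transport[of l] zero_le_power2[of "norm (Xt X (s l) *v (?\<beta> - b l))"]
      unfolding A_def by linarith
  qed
  have "A \<longlonglongrightarrow> ?loss t ?\<beta> - ?loss t ?\<beta> + 0"
    unfolding A_def by (intro tendsto_intros penalized_loss_tendsto assms(2) G)
  then have "(\<lambda>l. sqrt (A l)) \<longlonglongrightarrow> 0"
    using tendsto_real_sqrt by fastforce
  then have "(\<lambda>l. Xt X t *v (c l - ?\<beta>)) \<longlonglongrightarrow> 0"
    by (rule Lim_null_comparison[rotated]) (use bound in \<open>auto intro: always_eventually real_le_rsqrt\<close>)
  then have "(\<lambda>l. Xt X t *v (c l - ?\<beta>) + Xt X t *v ?\<beta> + X *v e l) \<longlonglongrightarrow> 0 + Xt X t *v ?\<beta> + X *v 0"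
    by (intro tendsto_intros e)
  then show ?thesis
    by (simp add: split b_def[symmetric] matrix_vector_mult_diff_distrib)
qed

theorem theorem3:
  fixes X :: "real^'p^'n" and y :: "real^'n" and \<delta> lam :: real
    and s :: "nat \<Rightarrow> real^'p" and t :: "real^'p"
  assumes "\<delta> > 0" and "lam > 0"
    and "\<And>l j. 0 \<le> s l $ j \<and> s l $ j < 1"
    and "\<And>j. 0 \<le> t $ j \<and> t $ j \<le> 1"
    and "s \<longlonglongrightarrow> t"
  shows "(\<lambda>l. f_lam X y \<delta> lam (s l)) \<longlonglongrightarrow> f_lam X y \<delta> lam t"
proof -
  have "\<bar>s l $ j\<bar> \<le> 1" "\<bar>t $ j\<bar> \<le> 1" for l j
    using assms(3)[of l j] assms(4)[of j] by auto
  then have "(\<lambda>l. Xt X (s l) *v beta_t X y \<delta> (s l)) \<longlonglongrightarrow> Xt X t *v beta_t X y \<delta> t"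
    using Xt_beta_t_tendsto[OF assms(1,5)] by blast
  then show ?thesis
    unfolding f_lam_def by (intro tendsto_intros tendsto_vec_nth assms(5))
qed

end
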